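(* Consider a two-player general-sum bimatrix game with payoff matrices $\mathbf{R}=(R_1,R_2)$, together with the risk-averse, boundedly rational objectives and the associated modified 4-player game described in the context. If the modified 4-player game is strictly monotone, i.e. its gradient operator $F(\cdot;\mathbf{R})$ satisfies $(z-z')^T(F(z;\mathbf{R})-F(z';\mathbf{R}))>0$ for all $z\neq z'$ in $\mathcal{Z}$, then the risk-adjusted quantal response equilibrium (RQE) of the original two-player game is unique: any two RQEs of the original game coincide.
   Context: Two players $i\in\{1,2\}$ have finite action sets $\mathcal{A}_1,\mathcal{A}_2$; $-i$ denotes the player other than $i$, and $\Delta_n$ denotes the probability simplex in $\mathbb{R}^n$. The payoff matrices are $R_1\in\mathbb{R}^{|\mathcal{A}_1|\times|\mathcal{A}_2|}$ and $R_2\in\mathbb{R}^{|\mathcal{A}_2|\times|\mathcal{A}_1|}$, where $[R_i]_{mn}$ is the payoff of player $i$ when $i$ plays $m$ and $-i$ plays $n$. For each $i$ fix $\epsilon_i>0$, a differentiable strictly convex function $\nu_i$ (defined on an open set containing $\Delta_{|\mathcal{A}_i|}$), and a differentiable penalty function $D_i:\Delta_{|\mathcal{A}_{-i}|}\times\Delta_{|\mathcal{A}_{-i}|}\to\mathbb{R}$ that is convex in its first argument. Player $i$ chooses a mixed strategy $\pi_i\in\Delta_{|\mathcal{A}_i|}$ to minimize $$f_i(\pi_i,\pi_{-i};R_i)=\sup_{p_i\in\Delta_{|\mathcal{A}_{-i}|}}\big[-\pi_i^TR_ip_i-D_i(p_i,\pi_{-i})\big]+\epsilon_i\nu_i(\pi_i).$$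 An RQE is a pair $(\pi_1^*,\pi_2^* )\in\Delta_{|\mathcal{A}_1|}\times\Delta_{|\mathcal{A}_2|}$ with $f_i(\pi_i^*,\pi_{-i}^*;R_i)\le f_i(\pi_i,\pi_{-i}^*;R_i)$ for all $\pi_i\in\Delta_{|\mathcal{A}_i|}$ and both $i$. The modified 4-player game has joint strategy $z=(\pi_1,\pi_2,p_1,p_2)\in\mathcal{Z}=\Delta_{|\mathcal{A}_1|}\times\Delta_{|\mathcal{A}_2|}\times\Delta_{|\mathcal{A}_2|}\times\Delta_{|\mathcal{A}_1|}$; player $\pi_i$ minimizes $J_i(z)=-\pi_i^TR_ip_i-D_i(p_i,\pi_{-i})+\epsilon_i\nu_i(\pi_i)$ over $\pi_i$, and adversary $p_i$ minimizes $\bar J_i(z)=\pi_i^TR_ip_i+D_i(p_i,\pi_{-i})-\epsilon_i\nu_i(\pi_i)$ over $p_i$. Its gradient operator is $$F(z;\mathbf{R})=\big(-R_1p_1+\epsilon_1\nabla\nu_1(\pi_1),\ -R_2p_2+\epsilon_2\nabla\nu_2(\pi_2),\ R_1^T\pi_1+\nabla_{p_1}D_1(p_1,\pi_2),\ R_2^T\pi_2+\nabla_{p_2}D_2(p_2,\pi_1)\big).$$ *)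

theory Defs
  imports "HOL-Analysis.Analysis"
begin

definition prob_simplex :: "(real ^ 'n::finite) set" where
  "prob_simplex = {x. (\<forall>i. 0 \<le> x $ i) \<and> (\<Sum>i\<in>UNIV. x $ i) = 1}"

definition strictly_convex_on :: "'a::real_vector set \<Rightarrow> ('a \<Rightarrow> real) \<Rightarrow> bool" where
  "strictly_convex_on S f \<longleftrightarrow> convex S \<and>
     (\<forall>x\<in>S. \<forall>y\<in>S. x \<noteq> y \<longrightarrow> (\<forall>t. 0 < t \<and> t < 1 \<longrightarrow>
        f ((1 - t) *\<^sub>R x + t *\<^sub>R y) < (1 - t) * f x + t * f y))"

definition grad :: "('a::euclidean_space \<Rightarrow> real) \<Rightarrow> 'a \<Rightarrow> 'a" where
  "grad f x = (THE g. (f has_derivative (\<lambda>h. g \<bullet> h)) (at x))"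

definition obj ::
  "real ^ 'o::finite ^ 'm::finite \<Rightarrow> real \<Rightarrow> (real ^ 'm \<Rightarrow> real) \<Rightarrow>
   (real ^ 'o \<Rightarrow> real ^ 'o \<Rightarrow> real) \<Rightarrow> real ^ 'm \<Rightarrow> real ^ 'o \<Rightarrow> real" where
  "obj R eps nu D s opp =
     (SUP p\<in>prob_simplex. - (s \<bullet> (R *v p)) - D p opp) + eps * nu s"

definition is_RQE ::
  "real ^ 'b::finite ^ 'a::finite \<Rightarrow> real ^ 'a ^ 'b \<Rightarrow> real \<Rightarrow> real \<Rightarrow>
   (real ^ 'a \<Rightarrow> real) \<Rightarrow> (real ^ 'b \<Rightarrow> real) \<Rightarrow>
   (real ^ 'b \<Rightarrow> real ^ 'b \<Rightarrow> real) \<Rightarrow> (real ^ 'a \<Rightarrow> real ^ 'a \<Rightarrow> real) \<Rightarrow>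
   real ^ 'a \<Rightarrow> real ^ 'b \<Rightarrow> bool" where
  "is_RQE R1 R2 eps1 eps2 nu1 nu2 D1 D2 pi1 pi2 \<longleftrightarrow>
     pi1 \<in> prob_simplex \<and> pi2 \<in> prob_simplex \<and>
     (\<forall>s\<in>prob_simplex. obj R1 eps1 nu1 D1 pi1 pi2 \<le> obj R1 eps1 nu1 D1 s pi2) \<and>
     (\<forall>s\<in>prob_simplex. obj R2 eps2 nu2 D2 pi2 pi1 \<le> obj R2 eps2 nu2 D2 s pi1)"

definition Zset :: "((real ^ 'a::finite) \<times> (real ^ 'b::finite) \<times> (real ^ 'b) \<times> (real ^ 'a)) set" where
  "Zset = prob_simplex \<times> prob_simplex \<times> prob_simplex \<times> prob_simplex"

definition Fop ::
  "real ^ 'b::finite ^ 'a::finite \<Rightarrow> real ^ 'a ^ 'b \<Rightarrow> real \<Rightarrow> real \<Rightarrow>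
   (real ^ 'a \<Rightarrow> real) \<Rightarrow> (real ^ 'b \<Rightarrow> real) \<Rightarrow>
   (real ^ 'b \<Rightarrow> real ^ 'b \<Rightarrow> real) \<Rightarrow> (real ^ 'a \<Rightarrow> real ^ 'a \<Rightarrow> real) \<Rightarrow>
   (real ^ 'a) \<times> (real ^ 'b) \<times> (real ^ 'b) \<times> (real ^ 'a) \<Rightarrow>
   (real ^ 'a) \<times> (real ^ 'b) \<times> (real ^ 'b) \<times> (real ^ 'a)" where
  "Fop R1 R2 eps1 eps2 nu1 nu2 D1 D2 z =
     (case z of (pi1, pi2, p1, p2) \<Rightarrow>
       (- (R1 *v p1) + eps1 *\<^sub>R grad nu1 pi1,
        - (R2 *v p2) + eps2 *\<^sub>R grad nu2 pi2,
        transpose R1 *v pi1 + grad (\<lambda>p. D1 p pi2) p1,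
        transpose R2 *v pi2 + grad (\<lambda>p. D2 p pi1) p2))"

definition strictly_monotone_on :: "'a::real_inner set \<Rightarrow> ('a \<Rightarrow> 'a) \<Rightarrow> bool" where
  "strictly_monotone_on S F \<longleftrightarrow>
     (\<forall>z\<in>S. \<forall>z'\<in>S. z \<noteq> z' \<longrightarrow> (z - z') \<bullet> (F z - F z') > 0)"

end

theory Submission
  imports Defs
begin

text \<open>Every RQE \<open>(\<pi>\<^sub>1, \<pi>\<^sub>2)\<close> extends, by the adversaries' best responses \<open>p\<^sub>1, p\<^sub>2\<close>, to a
  solution \<open>z = (\<pi>\<^sub>1, \<pi>\<^sub>2, p\<^sub>1, p\<^sub>2)\<close> of the variational inequality \<open>F(z) \<bullet> (z' - z) \<ge> 0\<close> on \<open>\<Z>\<close>.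
  The \<open>p\<close>-components of this inequality are the first-order conditions of the adversaries'
  maximisation problems. Strict monotonicity of \<open>F\<close> in the \<open>p\<close>-coordinates makes each
  best response unique, and then Danskin's argument (maximisers at \<open>\<pi> + t d\<close> converge to the
  maximiser at \<open>\<pi>\<close> as \<open>t \<rightarrow> 0\<^sup>+\<close>) gives the one-sided derivative of the inner supremum, hence
  the \<open>\<pi>\<close>-components. Finally, two solutions \<open>z, z'\<close> of a variational inequality with a
  strictly monotone operator coincide, since adding their inequalities gives
  \<open>(z - z') \<bullet> (F z - F z') \<le> 0\<close>.\<close>

definition solves_VI :: "'a::real_inner set \<Rightarrow> ('a \<Rightarrow> 'a) \<Rightarrow> 'a \<Rightarrow> bool" where
  "solves_VI S F x \<longleftrightarrow> x \<in> S \<and> (\<forall>z\<in>S. 0 \<le> F x \<bullet> (z - x))"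

lemma solves_VI_unique:
  assumes "strictly_monotone_on S F" "solves_VI S F x" "solves_VI S F y"
  shows "x = y"
proof (rule ccontr)
  assume "x \<noteq> y"
  with assms have "0 < (x - y) \<bullet> (F x - F y)"
    unfolding strictly_monotone_on_def solves_VI_def by blast
  moreover have "(x - y) \<bullet> (F x - F y) = - (F x \<bullet> (y - x)) - F y \<bullet> (x - y)"
    by (simp add: inner_diff_left inner_diff_right inner_commute)
  moreover have "0 \<le> F x \<bullet> (y - x)" "0 \<le> F y \<bullet> (x - y)"
    using assms(2,3) unfolding solves_VI_def by auto
  ultimately show False by linarith
qed

lemma has_derivative_grad:
  fixes f :: "'a::euclidean_space \<Rightarrow> real"
  assumes "f differentiable (at x)"
  shows "(f has_derivative (\<lambda>h. grad f x \<bullet> h)) (at x)"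
proof -
  obtain L where L: "(f has_derivative L) (at x)"
    using assms unfolding differentiable_def by blast
  have "linear L"
    using L has_derivative_linear by blast
  then have "L = (\<lambda>h. adjoint L 1 \<bullet> h)"
    by (simp add: fun_eq_iff adjoint_works inner_commute)
  with L have g: "(f has_derivative (\<lambda>h. adjoint L 1 \<bullet> h)) (at x)"
    by simp
  have unique: "g = adjoint L 1" if "(f has_derivative (\<lambda>h. g \<bullet> h)) (at x)" for g
    using has_derivative_unique[OF that g] by (metis vector_eq_rdot)
  have "grad f x = adjoint L 1"
    unfolding grad_def using g unique by (rule the_equality)
  with g show ?thesis by simp
qed

lemma differentiable_at_partial_first:
  assumes "(\<lambda>(p, q). f p q) differentiable (at (p, q))"
  shows "(\<lambda>p. f p q) differentiable (at p)"
proof -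
  have "(\<lambda>p. (p, q)) differentiable (at p)"
    by (rule differentiableI) (auto intro!: derivative_eq_intros)
  with assms have "((\<lambda>(p, q). f p q) \<circ> (\<lambda>p. (p, q))) differentiable (at p)"
    by (intro differentiable_chain_at) simp_all
  then show ?thesis by (simp add: o_def)
qed

lemma has_derivative_along_line:
  fixes f :: "'a::real_normed_vector \<Rightarrow> real"
  assumes "(f has_derivative f') (at x)"
  shows "((\<lambda>t. f (x + t *\<^sub>R v)) has_real_derivative f' v) (at 0)"
proof -
  interpret f': bounded_linear f'
    using assms by (rule has_derivative_bounded_linear)
  have "((\<lambda>t. x + t *\<^sub>R v) has_derivative (\<lambda>t. t *\<^sub>R v)) (at 0)"
    by (auto intro!: derivative_eq_intros)
  then have "((\<lambda>t. f (x + t *\<^sub>R v)) has_derivative (\<lambda>t. f' (t *\<^sub>R v))) (at 0)"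
    by (rule has_derivative_compose) (simp add: assms)
  then show ?thesis
    unfolding has_field_derivative_def by (simp add: f'.scaleR mult_commute_abs)
qed

lemma has_derivative_difference_quotient_LIMSEQ:
  fixes f :: "'a::real_normed_vector \<Rightarrow> real"
  assumes "(f has_derivative f') (at x)" and t: "t \<longlonglongrightarrow> 0" "\<forall>n. t n \<noteq> 0"
  shows "(\<lambda>n. (f (x + t n *\<^sub>R v) - f x) / t n) \<longlonglongrightarrow> f' v"
proof -
  have "((\<lambda>\<tau>. (f (x + \<tau> *\<^sub>R v) - f x) / \<tau>) \<longlongrightarrow> f' v) (at 0)"
    using has_derivative_along_line[OF assms(1), of v] unfolding DERIV_def by simp
  moreover have "filterlim t (at 0) sequentially"
    using t unfolding filterlim_at by (simp add: always_eventually)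
  ultimately show ?thesis
    by (rule filterlim_compose)
qed

lemma has_derivative_nonneg_at_min_on_convex:
  fixes f :: "'a::real_normed_vector \<Rightarrow> real"
  assumes f': "(f has_derivative f') (at x)"
    and S: "convex S" "x \<in> S" "y \<in> S" and min: "\<forall>z\<in>S. f x \<le> f z"
  shows "0 \<le> f' (y - x)"
proof (rule ccontr)
  assume "\<not> 0 \<le> f' (y - x)"
  then obtain e where e: "0 < e" "\<forall>t>0. t < e \<longrightarrow> f (x + t *\<^sub>R (y - x)) < f x"
    using DERIV_neg_dec_right[OF has_derivative_along_line[OF f', of "y - x"]] by auto
  define t where "t = min (e / 2) 1"
  have t: "0 < t" "t < e" "t \<le> 1"
    using e(1) unfolding t_def by auto
  have "x + t *\<^sub>R (y - x) = (1 - t) *\<^sub>R x + t *\<^sub>R y"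
    by (simp add: algebra_simps)
  also have "\<dots> \<in> S"
    using S t by (intro convexD_alt) auto
  finally show False
    using min e(2) t by fastforce
qed

lemma minimizer_solves_VI:
  fixes f :: "'a::real_inner \<Rightarrow> real"
  assumes "(f has_derivative (\<lambda>h. G x \<bullet> h)) (at x)"
    and "convex S" "x \<in> S" "\<forall>z\<in>S. f x \<le> f z"
  shows "solves_VI S G x"
  using has_derivative_nonneg_at_min_on_convex[OF assms(1)] assms(2-4)
  unfolding solves_VI_def by blast

lemma maximizers_subseq_tendsto_unique_maximizer:
  fixes h :: "'a::topological_space \<Rightarrow> 'b::metric_space \<Rightarrow> real"
  assumes K: "compact K" and h: "continuous_on (S \<times> K) (\<lambda>(x, p). h x p)"
    and x: "\<forall>n. x n \<in> S" "x \<longlonglongrightarrow> x0" "x0 \<in> S"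
    and P: "\<forall>n. P n \<in> K \<and> (\<forall>q\<in>K. h (x n) q \<le> h (x n) (P n))"
    and unique: "\<forall>p\<in>K. (\<forall>q\<in>K. h x0 q \<le> h x0 p) \<longrightarrow> p = p0"
  shows "\<exists>r. strict_mono r \<and> (P \<circ> r) \<longlonglongrightarrow> p0"
proof -
  obtain l r where l: "l \<in> K" "strict_mono r" "(P \<circ> r) \<longlonglongrightarrow> l"
    using seq_compactE[OF compact_imp_seq_compact[OF K]] P by metis
  have xr: "(x \<circ> r) \<longlonglongrightarrow> x0"
    using LIMSEQ_subseq_LIMSEQ[OF x(2) l(2)] .
  have lim: "(\<lambda>n. h (x (r n)) (Q n)) \<longlonglongrightarrow> h x0 q"
    if "Q \<longlonglongrightarrow> q" "q \<in> K" "\<forall>n. Q n \<in> K" for Q q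
  proof -
    have "(\<lambda>n. (x (r n), Q n)) \<longlonglongrightarrow> (x0, q)"
      using xr that(1) by (intro tendsto_Pair) (simp_all add: o_def)
    from continuous_on_tendsto_compose[OF h this] show ?thesis
      using x that by simp
  qed
  have "h x0 q \<le> h x0 l" if "q \<in> K" for q
  proof (rule LIMSEQ_le)
    show "(\<lambda>n. h (x (r n)) q) \<longlonglongrightarrow> h x0 q"
      using lim[of "\<lambda>n. q"] that by simp
    show "(\<lambda>n. h (x (r n)) (P (r n))) \<longlonglongrightarrow> h x0 l"
      using lim[of "P \<circ> r"] l P by (simp add: o_def)
    show "\<exists>N. \<forall>n\<ge>N. h (x (r n)) q \<le> h (x (r n)) (P (r n))"
      using P that by blast
  qed
  then show ?thesis
    using unique l by auto
qed

lemma convex_prob_simplex: "convex (prob_simplex :: (real ^ 'n::finite) set)"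
  unfolding convex_def prob_simplex_def
  by (auto simp: sum.distrib sum_distrib_left[symmetric])

lemma compact_prob_simplex: "compact (prob_simplex :: (real ^ 'n::finite) set)"
proof -
  have "closed (prob_simplex :: (real ^ 'n) set)"
    unfolding prob_simplex_def
    by (intro closed_Collect_conj closed_Collect_all closed_Collect_le closed_Collect_eq
        continuous_intros)
  moreover have "norm x \<le> 1" if "x \<in> (prob_simplex :: (real ^ 'n) set)" for x
  proof -
    have "norm x \<le> (\<Sum>i\<in>UNIV. \<bar>x $ i\<bar>)"
      by (rule norm_le_l1_cart)
    also have "\<dots> = (\<Sum>i\<in>UNIV. x $ i)"
      using that unfolding prob_simplex_def by simp
    finally show ?thesis
      using that unfolding prob_simplex_def by simp
  qed
  then have "bounded (prob_simplex :: (real ^ 'n) set)"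
    unfolding bounded_iff by blast
  ultimately show ?thesis
    by (simp add: compact_eq_bounded_closed)
qed

lemma uniform_in_prob_simplex:
  "(\<chi> i. 1 / real CARD('n)) \<in> (prob_simplex :: (real ^ 'n::finite) set)"
  unfolding prob_simplex_def by simp

lemma SUP_bilinear_increment_nonneg:
  fixes A :: "'b \<Rightarrow> 'a::real_inner" and g :: "'b \<Rightarrow> real"
  assumes p: "p \<in> K" "\<forall>x\<in>K. - (s0 \<bullet> A x) - g x \<le> - (s0 \<bullet> A p) - g p"
    and q: "q \<in> K" "\<forall>x\<in>K. - (s \<bullet> A x) - g x \<le> - (s \<bullet> A q) - g q"
    and s0_le: "(SUP x\<in>K. - (s0 \<bullet> A x) - g x) + eps * nu s0
                \<le> (SUP x\<in>K. - (s \<bullet> A x) - g x) + eps * nu s"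
  shows "0 \<le> eps * (nu s - nu s0) - A q \<bullet> (s - s0)"
proof -
  have "(SUP x\<in>K. - (s \<bullet> A x) - g x) = - (s \<bullet> A q) - g q"
    using q by (intro cSup_eq_maximum) auto
  moreover have "(SUP x\<in>K. - (s0 \<bullet> A x) - g x) = - (s0 \<bullet> A p) - g p"
    using p by (intro cSup_eq_maximum) auto
  moreover have "- (s0 \<bullet> A q) - g q \<le> - (s0 \<bullet> A p) - g p"
    using p q by blast
  ultimately show ?thesis
    using s0_le by (simp add: inner_diff_right inner_commute right_diff_distrib)
qed

lemma bilinear_maximizers_subseq_tendsto:
  fixes A :: "'b::real_normed_vector \<Rightarrow> 'a::real_inner" and g :: "'b \<Rightarrow> real"
  assumes K: "compact K" "continuous_on K g" and A: "bounded_linear A"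
    and p0: "p0 \<in> K"
    and p0_unique: "\<forall>p\<in>K. (\<forall>q\<in>K. - (s0 \<bullet> A q) - g q \<le> - (s0 \<bullet> A p) - g p) \<longrightarrow> p = p0"
    and x: "x \<longlonglongrightarrow> s0"
  obtains P r where "\<forall>n. P n \<in> K \<and> (\<forall>q\<in>K. - (x n \<bullet> A q) - g q \<le> - (x n \<bullet> A (P n)) - g (P n))"
    and "strict_mono r" "(P \<circ> r) \<longlonglongrightarrow> p0"
proof -
  have "continuous_on K (\<lambda>p. - (s \<bullet> A p) - g p)" for s
    by (intro continuous_intros bounded_linear.continuous_on[OF A] K(2))
  then have "\<forall>n. \<exists>p\<in>K. \<forall>q\<in>K. - (x n \<bullet> A q) - g q \<le> - (x n \<bullet> A p) - g p"
    using continuous_attains_sup[OF K(1)] p0 by blast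
  then obtain P
    where P: "\<forall>n. P n \<in> K \<and> (\<forall>q\<in>K. - (x n \<bullet> A q) - g q \<le> - (x n \<bullet> A (P n)) - g (P n))"
    by (metis (no_types, lifting))
  have "continuous_on (UNIV \<times> K) (\<lambda>z. g (snd z))"
    using K(2) by (rule continuous_on_compose2) (auto intro: continuous_on_snd)
  then have "continuous_on (UNIV \<times> K) (\<lambda>z. - (fst z \<bullet> A (snd z)) - g (snd z))"
    by (intro continuous_intros bounded_linear.continuous_on[OF A])
  then have "continuous_on (UNIV \<times> K) (\<lambda>(s, p). - (s \<bullet> A p) - g p)"
    by (simp add: case_prod_beta')
  from maximizers_subseq_tendsto_unique_maximizer[OF K(1) this _ x _ P p0_unique]
  show ?thesis
    using P that by auto
qed

lemma danskin_first_order_condition: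
  fixes A :: "'b::real_normed_vector \<Rightarrow> 'a::real_inner" and g :: "'b \<Rightarrow> real"
    and nu :: "'a \<Rightarrow> real"
  assumes K: "compact K" "continuous_on K g" and A: "bounded_linear A"
    and p0: "p0 \<in> K" "\<forall>q\<in>K. - (s0 \<bullet> A q) - g q \<le> - (s0 \<bullet> A p0) - g p0"
    and p0_unique: "\<forall>p\<in>K. (\<forall>q\<in>K. - (s0 \<bullet> A q) - g q \<le> - (s0 \<bullet> A p) - g p) \<longrightarrow> p = p0"
    and S: "convex S" "s0 \<in> S" "s \<in> S"
    and nu: "(nu has_derivative nu') (at s0)"
    and s0_min: "\<forall>s\<in>S. (SUP p\<in>K. - (s0 \<bullet> A p) - g p) + eps * nu s0
                       \<le> (SUP p\<in>K. - (s \<bullet> A p) - g p) + eps * nu s"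
  shows "0 \<le> eps * nu' (s - s0) - A p0 \<bullet> (s - s0)"
proof -
  define d where "d = s - s0"
  define t where "t n = 1 / real (Suc n)" for n
  define x where "x n = s0 + t n *\<^sub>R d" for n
  have t: "0 < t n" "t n \<le> 1" for n
    unfolding t_def by auto
  have t_lim: "t \<longlonglongrightarrow> 0"
    unfolding t_def using LIMSEQ_Suc[OF lim_1_over_n] by simp
  have x: "x n \<in> S" for n
  proof -
    have "x n = (1 - t n) *\<^sub>R s0 + t n *\<^sub>R s"
      by (simp add: x_def d_def algebra_simps)
    then show ?thesis
      using S t[of n] by (simp add: convexD_alt)
  qed
  have "x \<longlonglongrightarrow> s0 + 0 *\<^sub>R d"
    unfolding x_def by (intro tendsto_intros t_lim)
  then obtain P r
    where P: "\<forall>n. P n \<in> K \<and> (\<forall>q\<in>K. - (x n \<bullet> A q) - g q \<le> - (x n \<bullet> A (P n)) - g (P n))"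
      and r: "strict_mono r" "(P \<circ> r) \<longlonglongrightarrow> p0"
    using bilinear_maximizers_subseq_tendsto[OF K A p0(1) p0_unique] by auto
  have quotient_bound: "0 \<le> eps * ((nu (x n) - nu s0) / t n) - A (P n) \<bullet> d" for n
  proof -
    have "0 \<le> eps * (nu (x n) - nu s0) - A (P n) \<bullet> (x n - s0)"
      using SUP_bilinear_increment_nonneg[OF p0] P s0_min x by blast
    also have "\<dots> = t n * (eps * ((nu (x n) - nu s0) / t n) - A (P n) \<bullet> d)"
      using t[of n] by (simp add: x_def field_simps)
    finally show ?thesis
      using t[of n] by (simp add: zero_le_mult_iff)
  qed
  have "\<forall>n. (t \<circ> r) n \<noteq> 0"
    using t(1) by (metis comp_apply less_irrefl)
  from has_derivative_difference_quotient_LIMSEQ[OF nu LIMSEQ_subseq_LIMSEQ[OF t_lim r(1)] this]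
  have "(\<lambda>n. (nu (x (r n)) - nu s0) / t (r n)) \<longlonglongrightarrow> nu' d"
    unfolding x_def by (simp add: o_def)
  then have "(\<lambda>n. eps * ((nu (x (r n)) - nu s0) / t (r n)) - A (P (r n)) \<bullet> d)
               \<longlonglongrightarrow> eps * nu' d - A p0 \<bullet> d"
    using r(2) by (intro tendsto_intros bounded_linear.tendsto[OF A]) (simp_all add: o_def)
  then have "0 \<le> eps * nu' d - A p0 \<bullet> d"
    using quotient_bound by (intro LIMSEQ_le_const) auto
  then show ?thesis
    by (simp add: d_def)
qed

lemma bilinear_maximizer_solves_VI:
  fixes R :: "real ^ 'o::finite ^ 'm::finite" and g :: "real ^ 'o \<Rightarrow> real"
  assumes g: "g differentiable (at p)" and p: "p \<in> prob_simplex"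
    and max: "\<forall>q\<in>prob_simplex. - (s \<bullet> (R *v q)) - g q \<le> - (s \<bullet> (R *v p)) - g p"
  shows "solves_VI prob_simplex (\<lambda>p. transpose R *v s + grad g p) p"
proof (rule minimizer_solves_VI)
  have "((\<lambda>q. (transpose R *v s) \<bullet> q + g q) has_derivative
          (\<lambda>h. (transpose R *v s) \<bullet> h + grad g p \<bullet> h)) (at p)"
    by (intro has_derivative_add has_derivative_inner_right has_derivative_ident
        has_derivative_grad[OF g])
  then show "((\<lambda>q. (transpose R *v s) \<bullet> q + g q) has_derivative
               (\<lambda>h. (transpose R *v s + grad g p) \<bullet> h)) (at p)"
    by (simp add: inner_add_left)
  show "\<forall>q\<in>prob_simplex. (transpose R *v s) \<bullet> p + g p \<le> (transpose R *v s) \<bullet> q + g q"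
  proof
    fix q :: "real ^ 'o"
    assume "q \<in> prob_simplex"
    with max have "- (s \<bullet> (R *v q)) - g q \<le> - (s \<bullet> (R *v p)) - g p"
      by blast
    then show "(transpose R *v s) \<bullet> p + g p \<le> (transpose R *v s) \<bullet> q + g q"
      by (simp only: transpose_matrix_vector dot_lmul_matrix)
  qed
qed (use p convex_prob_simplex in auto)

lemma best_response_solves_VIs:
  fixes R :: "real ^ 'o::finite ^ 'm::finite" and nu :: "real ^ 'm \<Rightarrow> real"
    and D :: "real ^ 'o \<Rightarrow> real ^ 'o \<Rightarrow> real"
  assumes nu: "nu differentiable (at s)"
    and D: "\<forall>p\<in>prob_simplex. (\<lambda>p. D p opp) differentiable (at p)"
    and D_mono: "strictly_monotone_on prob_simplex (grad (\<lambda>p. D p opp))"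
    and opp: "opp \<in> prob_simplex" and s: "s \<in> prob_simplex"
    and s_opt: "\<forall>s'\<in>prob_simplex. obj R eps nu D s opp \<le> obj R eps nu D s' opp"
  shows "\<exists>p0. solves_VI prob_simplex (\<lambda>p. transpose R *v s + grad (\<lambda>p. D p opp) p) p0 \<and>
              solves_VI prob_simplex (\<lambda>s'. - (R *v p0) + eps *\<^sub>R grad nu s') s"
proof -
  have D_cont: "continuous_on prob_simplex (\<lambda>p. D p opp)"
    using D by (meson continuous_at_imp_continuous_on differentiable_imp_continuous_within)
  have "continuous_on prob_simplex (\<lambda>p. - (s \<bullet> (R *v p)) - D p opp)"
    by (intro continuous_intros bounded_linear.continuous_on[OF matrix_vector_mul_bounded_linear]
        D_cont)
  then obtain p0 where p0: "p0 \<in> prob_simplex"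
    "\<forall>q\<in>prob_simplex. - (s \<bullet> (R *v q)) - D q opp \<le> - (s \<bullet> (R *v p0)) - D p0 opp"
    using continuous_attains_sup[OF compact_prob_simplex] opp by blast
  have max_solves_VI:
    "solves_VI prob_simplex (\<lambda>p. transpose R *v s + grad (\<lambda>p. D p opp) p) p"
    if "p \<in> prob_simplex"
      "\<forall>q\<in>prob_simplex. - (s \<bullet> (R *v q)) - D q opp \<le> - (s \<bullet> (R *v p)) - D p opp" for p
    using bilinear_maximizer_solves_VI[of "\<lambda>p. D p opp"] D that by blast
  have "strictly_monotone_on prob_simplex (\<lambda>p. transpose R *v s + grad (\<lambda>p. D p opp) p)"
    using D_mono unfolding strictly_monotone_on_def by simp
  then have p0_unique: "\<forall>p\<in>prob_simplex. (\<forall>q\<in>prob_simplex. - (s \<bullet> (R *v q)) - D q opp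
                          \<le> - (s \<bullet> (R *v p)) - D p opp) \<longrightarrow> p = p0"
    using solves_VI_unique max_solves_VI p0 by blast
  have "0 \<le> eps * (grad nu s \<bullet> (s' - s)) - (R *v p0) \<bullet> (s' - s)" if "s' \<in> prob_simplex" for s'
    using s_opt
    by (intro danskin_first_order_condition[OF compact_prob_simplex D_cont
          matrix_vector_mul_bounded_linear p0 p0_unique convex_prob_simplex s that
          has_derivative_grad[OF nu]])
      (simp add: obj_def)
  then have "solves_VI prob_simplex (\<lambda>s'. - (R *v p0) + eps *\<^sub>R grad nu s') s"
    using s unfolding solves_VI_def by (simp add: inner_diff_left)
  with max_solves_VI[OF p0] show ?thesis
    by blast
qed

lemma strictly_monotone_grad_D1:
  fixes R1 :: "real ^ 'b::finite ^ 'a::finite"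
  assumes mono: "strictly_monotone_on Zset (Fop R1 R2 eps1 eps2 nu1 nu2 D1 D2)"
    and opp: "opp \<in> prob_simplex"
  shows "strictly_monotone_on prob_simplex (grad (\<lambda>p. D1 p opp))"
  unfolding strictly_monotone_on_def
proof (intro ballI impI)
  fix p q :: "real ^ 'b"
  assume p: "p \<in> prob_simplex" and q: "q \<in> prob_simplex" and "p \<noteq> q"
  define c :: "real ^ 'a" where "c = (\<chi> i. 1 / real CARD('a))"
  have Z: "(c, opp, p, c) \<in> Zset" "(c, opp, q, c) \<in> Zset"
    using p q opp uniform_in_prob_simplex unfolding c_def Zset_def by simp_all
  have "(c, opp, p, c) \<noteq> (c, opp, q, c)"
    using \<open>p \<noteq> q\<close> by simp
  from mono[unfolded strictly_monotone_on_def, rule_format, OF Z this]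
  show "0 < (p - q) \<bullet> (grad (\<lambda>p. D1 p opp) p - grad (\<lambda>p. D1 p opp) q)"
    by (simp add: Fop_def)
qed

lemma strictly_monotone_grad_D2:
  fixes R1 :: "real ^ 'b::finite ^ 'a::finite"
  assumes mono: "strictly_monotone_on Zset (Fop R1 R2 eps1 eps2 nu1 nu2 D1 D2)"
    and opp: "opp \<in> prob_simplex"
  shows "strictly_monotone_on prob_simplex (grad (\<lambda>p. D2 p opp))"
  unfolding strictly_monotone_on_def
proof (intro ballI impI)
  fix p q :: "real ^ 'a"
  assume p: "p \<in> prob_simplex" and q: "q \<in> prob_simplex" and "p \<noteq> q"
  define c :: "real ^ 'b" where "c = (\<chi> i. 1 / real CARD('b))"
  have Z: "(opp, c, c, p) \<in> Zset" "(opp, c, c, q) \<in> Zset"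
    using p q opp uniform_in_prob_simplex unfolding c_def Zset_def by simp_all
  have "(opp, c, c, p) \<noteq> (opp, c, c, q)"
    using \<open>p \<noteq> q\<close> by simp
  from mono[unfolded strictly_monotone_on_def, rule_format, OF Z this]
  show "0 < (p - q) \<bullet> (grad (\<lambda>p. D2 p opp) p - grad (\<lambda>p. D2 p opp) q)"
    by (simp add: Fop_def)
qed

lemma RQE_extends_to_solution_of_VI:
  fixes R1 :: "real ^ 'b::finite ^ 'a::finite"
  assumes nu1: "\<forall>x\<in>prob_simplex. nu1 differentiable (at x)"
    and nu2: "\<forall>x\<in>prob_simplex. nu2 differentiable (at x)"
    and D1: "\<forall>w\<in>prob_simplex \<times> prob_simplex. (\<lambda>(p, q). D1 p q) differentiable (at w)"
    and D2: "\<forall>w\<in>prob_simplex \<times> prob_simplex. (\<lambda>(p, q). D2 p q) differentiable (at w)"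
    and mono: "strictly_monotone_on Zset (Fop R1 R2 eps1 eps2 nu1 nu2 D1 D2)"
    and rqe: "is_RQE R1 R2 eps1 eps2 nu1 nu2 D1 D2 pi1 pi2"
  shows "\<exists>p1 p2. solves_VI Zset (Fop R1 R2 eps1 eps2 nu1 nu2 D1 D2) (pi1, pi2, p1, p2)"
proof -
  have pi: "pi1 \<in> prob_simplex" "pi2 \<in> prob_simplex"
    using rqe unfolding is_RQE_def by simp_all
  have "\<forall>p\<in>prob_simplex. (\<lambda>p. D1 p pi2) differentiable (at p)"
    using D1 pi(2) differentiable_at_partial_first by fastforce
  then obtain p1 where p1:
      "solves_VI prob_simplex (\<lambda>p. transpose R1 *v pi1 + grad (\<lambda>p. D1 p pi2) p) p1"
      "solves_VI prob_simplex (\<lambda>s. - (R1 *v p1) + eps1 *\<^sub>R grad nu1 s) pi1"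
    using best_response_solves_VIs[where D = D1 and opp = pi2 and s = pi1,
        OF _ _ strictly_monotone_grad_D1[OF mono pi(2)] pi(2) pi(1)]
      nu1 pi(1) rqe unfolding is_RQE_def by blast
  have "\<forall>p\<in>prob_simplex. (\<lambda>p. D2 p pi1) differentiable (at p)"
    using D2 pi(1) differentiable_at_partial_first by fastforce
  then obtain p2 where p2:
      "solves_VI prob_simplex (\<lambda>p. transpose R2 *v pi2 + grad (\<lambda>p. D2 p pi1) p) p2"
      "solves_VI prob_simplex (\<lambda>s. - (R2 *v p2) + eps2 *\<^sub>R grad nu2 s) pi2"
    using best_response_solves_VIs[where D = D2 and opp = pi1 and s = pi2,
        OF _ _ strictly_monotone_grad_D2[OF mono pi(1)] pi(1) pi(2)]
      nu2 pi(2) rqe unfolding is_RQE_def by blast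
  have "0 \<le> Fop R1 R2 eps1 eps2 nu1 nu2 D1 D2 (pi1, pi2, p1, p2) \<bullet> (z - (pi1, pi2, p1, p2))"
    if "z \<in> Zset" for z
    using that p1 p2 unfolding solves_VI_def Zset_def
    by (cases z) (simp add: Fop_def add_nonneg_nonneg)
  then show ?thesis
    using pi p1 p2 unfolding solves_VI_def Zset_def by blast
qed

theorem proposition1:
  fixes R1 :: "real ^ 'b::finite ^ 'a::finite"
    and R2 :: "real ^ 'a ^ 'b"
    and eps1 eps2 :: real
    and nu1 :: "real ^ 'a \<Rightarrow> real" and nu2 :: "real ^ 'b \<Rightarrow> real"
    and D1 :: "real ^ 'b \<Rightarrow> real ^ 'b \<Rightarrow> real"
    and D2 :: "real ^ 'a \<Rightarrow> real ^ 'a \<Rightarrow> real"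
    and U1 :: "(real ^ 'a) set" and U2 :: "(real ^ 'b) set"
    and W1 :: "((real ^ 'b) \<times> (real ^ 'b)) set" and W2 :: "((real ^ 'a) \<times> (real ^ 'a)) set"
  assumes eps: "eps1 > 0" "eps2 > 0"
    and U1: "open U1" "prob_simplex \<subseteq> U1" "strictly_convex_on U1 nu1"
            "\<forall>x\<in>U1. nu1 differentiable (at x)"
    and U2: "open U2" "prob_simplex \<subseteq> U2" "strictly_convex_on U2 nu2"
            "\<forall>x\<in>U2. nu2 differentiable (at x)"
    and W1: "open W1" "prob_simplex \<times> prob_simplex \<subseteq> W1"
            "\<forall>w\<in>W1. (\<lambda>(p, q). D1 p q) differentiable (at w)"
            "\<forall>q\<in>prob_simplex. convex_on prob_simplex (\<lambda>p. D1 p q)"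
    and W2: "open W2" "prob_simplex \<times> prob_simplex \<subseteq> W2"
            "\<forall>w\<in>W2. (\<lambda>(p, q). D2 p q) differentiable (at w)"
            "\<forall>q\<in>prob_simplex. convex_on prob_simplex (\<lambda>p. D2 p q)"
    and mono: "strictly_monotone_on Zset (Fop R1 R2 eps1 eps2 nu1 nu2 D1 D2)"
    and rqe: "is_RQE R1 R2 eps1 eps2 nu1 nu2 D1 D2 pi1 pi2"
    and rqe': "is_RQE R1 R2 eps1 eps2 nu1 nu2 D1 D2 pi1' pi2'"
  shows "pi1 = pi1' \<and> pi2 = pi2'"
proof -
  note VI = RQE_extends_to_solution_of_VI[of nu1 nu2 D1 D2 R1 R2 eps1 eps2]
  have nu: "\<forall>x\<in>prob_simplex. nu1 differentiable (at x)" "\<forall>x\<in>prob_simplex. nu2 differentiable (at x)"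
    using U1 U2 by blast+
  have D: "\<forall>w\<in>prob_simplex \<times> prob_simplex. (\<lambda>(p, q). D1 p q) differentiable (at w)"
    "\<forall>w\<in>prob_simplex \<times> prob_simplex. (\<lambda>(p, q). D2 p q) differentiable (at w)"
    using W1 W2 by blast+
  obtain p1 p2 where "solves_VI Zset (Fop R1 R2 eps1 eps2 nu1 nu2 D1 D2) (pi1, pi2, p1, p2)"
    using VI[OF nu D mono rqe] by blast
  moreover obtain p1' p2' where "solves_VI Zset (Fop R1 R2 eps1 eps2 nu1 nu2 D1 D2) (pi1', pi2', p1', p2')"
    using VI[OF nu D mono rqe'] by blast
  ultimately have "(pi1, pi2, p1, p2) = (pi1', pi2', p1', p2')"
    using solves_VI_unique[OF mono] by blast
  then show ?thesis
    by simp
qed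

end
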